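(* Let $\Gamma\in\mathcal S$ have $n$ vertices and let $\varphi$ be an embedding into $\mathbb Z^n$ such that exactly one index is of type (9), exactly one is of type (5), exactly one is of type (2), and every other index is of type (4) or (7). Then $\Gamma\in\mathcal C$.
   Context: A plumbing tree is a finite tree $\Gamma$ each of whose vertices $v$ carries an integer decoration $d(v)$. $\Gamma$ is minimal if no vertex has decoration $-1$. For $n\ge 1$ let $(\mathbb Z^n,Q_n)$ be the lattice with basis $E_1,\dots,E_n$ and $Q_n(E_i,E_j)=-\delta_{ij}$, and let $K=\sum_{i=1}^n E_i$. A plumbing tree $\Gamma$ on $n$ vertices is a symplectic plumbing tree if there is a map $\varphi$ (an embedding) from its vertex set to $\mathbb Z^n$ such that: for distinct vertices $v_1,v_2$, $Q_n(\varphi(v_1),\varphi(v_2))$ is $1$ if they are adjacent and $0$ otherwise; $Q_n(\varphi(v),\varphi(v))=d(v)$ for every $v$; and $Q_n(\varphi(v),K)+Q_n(\varphi(v),\varphi(v))=-2$ for every $v$. $\mathcal S$ is the set of minimal, connected symplectic plumbing trees. Index types: write $\varphi(v)=\sum_i a_{v,i}E_i$; for an index $i$ consider the multiset of nonzero coefficients $a_{v,i}$ as $v$ ranges over all vertices. Index $i$ is of type (1) if this multiset is $\{1\}$, (2) if $\{-1\}$, (3) if $\{-2\}$, (4) if $\{1,-1\}$, (5) if $\{1,-2\}$, (6) if $\{-1,-1\}$, (7) if $\{1,-1,-1\}$, (9) if $\{1,-1,-1,-1\}$, and (10) if it is empty. If $u$ is a vertex of decoration $-1$, blowing up $u$ means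 adding a new vertex of decoration $-1$ adjacent only to $u$ and decreasing $d(u)$ by $1$; blowing up an edge $uw$ means deleting that edge, adding a new vertex of decoration $-1$ adjacent exactly to $u$ and $w$, and decreasing $d(u)$ and $d(w)$ by $1$. Let $T_c$ be the tree with a central vertex of decoration $-1$ and three leaves of decorations $-2,-6,-3$. $\mathcal C$ is the set of trees obtained from $T_c$ by a finite (possibly empty) sequence of blow-ups, each of which blows up the current unique $(-1)$-vertex or an edge emanating from it, followed by changing the decoration of the unique $(-1)$-vertex to $-2$. *)

theory Defs
  imports Main "HOL-Library.Multiset"
begin

definition plumbing_tree :: "'v set \<Rightarrow> ('v \<Rightarrow> 'v \<Rightarrow> bool) \<Rightarrow> bool" where
  "plumbing_tree V E \<longleftrightarrow>
     finite V \<and> V \<noteq> {} \<and>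
     (\<forall>a b. E a b \<longrightarrow> a \<in> V \<and> b \<in> V) \<and>
     (\<forall>a b. E a b \<longrightarrow> E b a) \<and> (\<forall>a. \<not> E a a) \<and>
     (\<forall>a\<in>V. \<forall>b\<in>V. E\<^sup>*\<^sup>* a b) \<and>
     card {{a, b} | a b. E a b} = card V - 1"

definition minimal_tree :: "'v set \<Rightarrow> ('v \<Rightarrow> int) \<Rightarrow> bool" where
  "minimal_tree V d \<longleftrightarrow> (\<forall>v\<in>V. d v \<noteq> -1)"

text \<open>Lattice (Z^n, Q_n), vectors as functions nat => int, indices i < n.\<close>
definition Qn :: "nat \<Rightarrow> (nat \<Rightarrow> int) \<Rightarrow> (nat \<Rightarrow> int) \<Rightarrow> int" where
  "Qn n x y = - (\<Sum>i<n. x i * y i)"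

definition Kvec :: "nat \<Rightarrow> int" where
  "Kvec = (\<lambda>i. 1)"

definition symplectic_embedding ::
  "'v set \<Rightarrow> ('v \<Rightarrow> 'v \<Rightarrow> bool) \<Rightarrow> ('v \<Rightarrow> int) \<Rightarrow> ('v \<Rightarrow> nat \<Rightarrow> int) \<Rightarrow> bool" where
  "symplectic_embedding V E d \<phi> \<longleftrightarrow>
     (let n = card V in
       (\<forall>v\<in>V. \<forall>i\<ge>n. \<phi> v i = 0) \<and>
       (\<forall>v1\<in>V. \<forall>v2\<in>V. v1 \<noteq> v2 \<longrightarrow>
            Qn n (\<phi> v1) (\<phi> v2) = (if E v1 v2 then 1 else 0)) \<and>
       (\<forall>v\<in>V. Qn n (\<phi> v) (\<phi> v) = d v) \<and>
       (\<forall>v\<in>V. Qn n (\<phi> v) Kvec + Qn n (\<phi> v) (\<phi> v) = -2))"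

definition index_coeffs :: "'v set \<Rightarrow> ('v \<Rightarrow> nat \<Rightarrow> int) \<Rightarrow> nat \<Rightarrow> int multiset" where
  "index_coeffs V \<phi> i = image_mset (\<lambda>v. \<phi> v i) (mset_set {v\<in>V. \<phi> v i \<noteq> 0})"

definition type2 :: "int multiset" where "type2 = {#-1#}"
definition type4 :: "int multiset" where "type4 = {#1, -1#}"
definition type5 :: "int multiset" where "type5 = {#1, -2#}"
definition type7 :: "int multiset" where "type7 = {#1, -1, -1#}"
definition type9 :: "int multiset" where "type9 = {#1, -1, -1, -1#}"

text \<open>Generation of the family C.  Trees are built on vertex set {0..<m};
  the last argument is the current unique (-1)-vertex.\<close>
definition Tc_E :: "nat \<Rightarrow> nat \<Rightarrow> bool" where
  "Tc_E a b \<longleftrightarrow> (a = 0 \<and> b \<in> {1,2,3}) \<or> (b = 0 \<and> a \<in> {1,2,3})"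

definition Tc_d :: "nat \<Rightarrow> int" where
  "Tc_d v = (if v = 0 then -1 else if v = 1 then -2 else if v = 2 then -6
             else if v = 3 then -3 else 0)"

inductive cgen :: "nat \<Rightarrow> (nat \<Rightarrow> nat \<Rightarrow> bool) \<Rightarrow> (nat \<Rightarrow> int) \<Rightarrow> nat \<Rightarrow> bool" where
  base: "cgen 4 Tc_E Tc_d 0"
| blowup_vertex: "cgen m E d u \<Longrightarrow>
     cgen (Suc m) (\<lambda>a b. E a b \<or> {a, b} = {u, m}) (d(u := d u - 1, m := -1)) m"
| blowup_edge: "cgen m E d u \<Longrightarrow> E u x \<Longrightarrow>
     cgen (Suc m) (\<lambda>a b. (E a b \<and> {a, b} \<noteq> {u, x}) \<or> {a, b} = {u, m} \<or> {a, b} = {x, m})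
       (d(u := d u - 1, x := d x - 1, m := -1)) m"

definition in_C :: "'v set \<Rightarrow> ('v \<Rightarrow> 'v \<Rightarrow> bool) \<Rightarrow> ('v \<Rightarrow> int) \<Rightarrow> bool" where
  "in_C V E d \<longleftrightarrow> (\<exists>m E' d' u f. cgen m E' d' u \<and> bij_betw f V {0..<m} \<and>
      (\<forall>a\<in>V. \<forall>b\<in>V. E a b \<longleftrightarrow> E' (f a) (f b)) \<and>
      (\<forall>a\<in>V. d a = (d'(u := -2)) (f a)))"

end

theory Submission
  imports Defs Complex_Main
begin

text \<open>Deleting the index of type (2), which meets a single vertex \<open>w\<close>, embeds the tree with \<open>d w\<close>
  raised by one into the lattice spanned by the other \<open>n - 1\<close> basis vectors. The vertex vectors
  outnumber the coordinates and pair non-positively along a connected tree, so they satisfy a linear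
  relation with positive coefficients; pairing it with the canonical class forces \<open>d w = -2\<close>, so \<open>w\<close>
  becomes the unique \<open>(-1)\<close>-vertex.

  Then blow down the \<open>(-1)\<close>-vertex \<open>u\<close>: its vector is a basis vector \<open>e\<^sub>a\<close>, its neighbours are the
  vertices with coefficient \<open>-1\<close> at \<open>a\<close>, and as long as column \<open>a\<close> is of type (4) or (7), deleting
  \<open>u\<close> and the index \<open>a\<close> gives an embedding of the same kind of the blown-down tree, whose new
  \<open>(-1)\<close>-vertex is a neighbour of \<open>u\<close> of decoration \<open>-2\<close> (found by the positive relation again).
  When column \<open>a\<close> has type (9), the same relation shows that the tree is \<open>T\<^sub>c\<close>.\<close>

section \<open>Columns of an embedding\<close>

lemma count_index_coeffs:
  assumes "finite V" "k \<noteq> 0"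
  shows "count (index_coeffs V \<phi> i) k = card {v\<in>V. \<phi> v i = k}"
proof -
  have "count (index_coeffs V \<phi> i) k = (\<Sum>v\<in>(\<lambda>v. \<phi> v i) -` {k} \<inter> {v\<in>V. \<phi> v i \<noteq> 0}. 1)"
    unfolding index_coeffs_def count_image_mset using assms by (intro sum.cong) auto
  also have "\<dots> = card {v\<in>V. \<phi> v i = k}"
    using assms by (auto intro: arg_cong[where f=card])
  finally show ?thesis .
qed

lemma coeff_in_index_coeffs:
  assumes "finite V" "v \<in> V" "\<phi> v i \<noteq> 0"
  shows "\<phi> v i \<in># index_coeffs V \<phi> i"
  using assms unfolding index_coeffs_def by auto

lemma exists_vertex_with_coeff:
  "finite V \<Longrightarrow> k \<in># index_coeffs V \<phi> i \<Longrightarrow> \<exists>v\<in>V. \<phi> v i = k"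
  by (auto simp: index_coeffs_def)

lemma unique_vertex_with_coeff:
  assumes "finite V" "k \<noteq> 0" "count (index_coeffs V \<phi> i) k = 1"
  obtains w where "w \<in> V" "\<phi> w i = k" "\<And>v. v \<in> V \<Longrightarrow> \<phi> v i = k \<Longrightarrow> v = w"
proof -
  have "card {v\<in>V. \<phi> v i = k} = 1" using assms count_index_coeffs by metis
  then obtain w where "{v\<in>V. \<phi> v i = k} = {w}" by (rule card_1_singletonE)
  then show ?thesis using that by blast
qed

lemma type2_column:
  assumes "finite V" "index_coeffs V \<phi> i = type2"
  shows "\<exists>w\<in>V. \<forall>v\<in>V. \<phi> v i = (if v = w then -1 else 0)"
proof -
  obtain w where w: "w \<in> V" "\<phi> w i = -1" "\<And>v. v \<in> V \<Longrightarrow> \<phi> v i = -1 \<Longrightarrow> v = w"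
    using unique_vertex_with_coeff[OF assms(1), of "-1" \<phi> i] assms(2) by (auto simp: type2_def)
  have "\<phi> v i = 0 \<or> \<phi> v i = -1" if "v \<in> V" for v
    using coeff_in_index_coeffs[OF assms(1) that, of \<phi> i] assms(2) by (auto simp: type2_def)
  then show ?thesis using w by metis
qed

lemma index_coeffs_diff_vertex:
  "\<phi> u i = 0 \<Longrightarrow> index_coeffs (V - {u}) \<phi> i = index_coeffs V \<phi> i"
  unfolding index_coeffs_def by (rule arg_cong[where f="\<lambda>A. image_mset (\<lambda>v. \<phi> v i) (mset_set A)"]) auto

lemma type2_ne: "type9 \<noteq> type2" "type5 \<noteq> type2"
  by (simp_all add: type9_def type5_def type2_def add_eq_conv_ex)

section \<open>The intersection form on a set of indices\<close>

definition Q_on :: "'i set \<Rightarrow> ('i \<Rightarrow> int) \<Rightarrow> ('i \<Rightarrow> int) \<Rightarrow> int" where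
  "Q_on I x y = - (\<Sum>i\<in>I. x i * y i)"

lemma Qn_eq_Q_on: "Qn n x y = Q_on {..<n} x y"
  by (simp add: Qn_def Q_on_def)

lemma Q_on_commute: "Q_on I x y = Q_on I y x"
  by (simp add: Q_on_def mult.commute)

lemma Q_on_remove:
  "finite I \<Longrightarrow> a \<in> I \<Longrightarrow> Q_on (I - {a}) x y = Q_on I x y + x a * y a"
  by (simp add: Q_on_def sum_diff1)

lemma Q_on_unit_left:
  assumes "finite I" "b \<in> I" "\<forall>i\<in>I. x i = (if i = b then 1 else 0)"
  shows "Q_on I x y = - y b"
proof -
  have "(\<Sum>i\<in>I. x i * y i) = (\<Sum>i\<in>I. if i = b then y i else 0)"
    using assms(3) by (intro sum.cong) auto
  then show ?thesis using assms(1,2) by (simp add: Q_on_def)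
qed

lemma Q_on_two_coeffs_left:
  assumes "finite I" "a \<in> I" "b \<in> I" "a \<noteq> b"
    and "\<forall>i\<in>I. x i = (if i = a then -1 else if i = b then 1 else 0)"
  shows "Q_on I x y = y a - y b"
proof -
  have "(\<Sum>i\<in>I. x i * y i) = (\<Sum>i\<in>I. (if i = b then y i else 0) - (if i = a then y i else 0))"
    using assms(4,5) by (intro sum.cong) auto
  then show ?thesis using assms(1-3) by (simp add: Q_on_def sum_subtractf)
qed

lemma Q_on_self_le:
  assumes "finite I" "i \<in> I"
  shows "Q_on I x x \<le> - (x i * x i)"
  using member_le_sum[of i I "\<lambda>i. x i * x i"] assms by (simp add: Q_on_def)

lemma sum_le_sum_squares:
  fixes x :: "'i \<Rightarrow> int"
  shows "(\<Sum>i\<in>I. x i) \<le> (\<Sum>i\<in>I. x i * x i)"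
proof (intro sum_mono)
  fix i
  show "x i \<le> x i * x i"
  proof (cases "x i \<le> 0")
    case True
    then show ?thesis using zero_le_square[of "x i"] by linarith
  next
    case False
    then show ?thesis using mult_left_mono[of 1 "x i" "x i"] by simp
  qed
qed

text \<open>The vector of a \<open>(-1)\<close>-vertex is a basis vector: \<open>\<Sum>i. x i * x i - x i = 0\<close> with nonnegative terms.\<close>

lemma int_unit_vector:
  fixes x :: "'i \<Rightarrow> int"
  assumes "finite I" "(\<Sum>i\<in>I. x i * x i) = 1" "(\<Sum>i\<in>I. x i) = 1"
  shows "\<exists>b\<in>I. \<forall>i\<in>I. x i = (if i = b then 1 else 0)"
proof -
  have nonneg: "x i * x i - x i \<ge> 0" for i
    using sum_le_sum_squares[of x "{i}"] by simp
  have "(\<Sum>i\<in>I. x i * x i - x i) = 0" using assms(2,3) by (simp add: sum_subtractf)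
  then have "\<forall>i\<in>I. x i * x i - x i = 0"
    using sum_nonneg_eq_0_iff[OF assms(1), of "\<lambda>i. x i * x i - x i"] nonneg by simp
  then have x01: "\<forall>i\<in>I. x i = 0 \<or> x i = 1"
    by (metis eq_iff_diff_eq_0 mult_cancel_right1)
  then have "(\<Sum>i\<in>I. x i) = (\<Sum>i\<in>{i\<in>I. x i = 1}. x i)"
    using assms(1) by (intro sum.mono_neutral_right) auto
  also have "\<dots> = card {i\<in>I. x i = 1}" by simp
  finally have "card {i\<in>I. x i = 1} = 1" using assms(3) by simp
  then obtain b where b: "{i\<in>I. x i = 1} = {b}" by (rule card_1_singletonE)
  then show ?thesis using x01 by (auto simp: set_eq_iff)
qed

lemma int_mult_eq_minus2:
  fixes p q :: int
  assumes "p * q = -2"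
  shows "(p * p = 1 \<and> q * q = 4) \<or> (p * p = 4 \<and> q * q = 1)"
proof -
  have "\<bar>p\<bar> \<le> 2"
    using dvd_imp_le_int[of "-2" p] assms
    by (metis dvd_triv_left abs_neg_numeral neg_equal_0_iff_equal zero_neq_numeral)
  moreover have "p \<noteq> 0" using assms by auto
  ultimately have "p \<in> {-2, -1, 1, 2}" by auto
  then show ?thesis using assms by auto
qed

lemma minus_one_vectors_nonadjacent:
  assumes "finite I"
    and "Q_on I x x = -1" "(\<Sum>i\<in>I. x i) = 1" "Q_on I y y = -1" "(\<Sum>i\<in>I. y i) = 1"
  shows "Q_on I x y \<le> 0"
proof -
  obtain b where b: "b \<in> I" "\<forall>i\<in>I. x i = (if i = b then 1 else 0)"
    using int_unit_vector[of I x] assms by (auto simp: Q_on_def)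
  obtain c where c: "c \<in> I" "\<forall>i\<in>I. y i = (if i = c then 1 else 0)"
    using int_unit_vector[of I y] assms by (auto simp: Q_on_def)
  have "y b \<ge> 0" using b(1) c(2) by simp
  then show ?thesis using Q_on_unit_left[OF assms(1) b] by simp
qed

section \<open>Positive linear relations\<close>

lemma exists_nontrivial_linear_relation:
  fixes g :: "'v \<Rightarrow> 'i \<Rightarrow> 'a::field"
  assumes "finite I" "finite V" "card I < card V"
  shows "\<exists>c. (\<exists>v\<in>V. c v \<noteq> 0) \<and> (\<forall>i\<in>I. (\<Sum>v\<in>V. c v * g v i) = 0)"
  using assms
proof (induction I arbitrary: V g rule: finite_induct)
  case empty
  then obtain v where "v \<in> V" by fastforce
  then show ?case by (intro exI[of _ "\<lambda>_. 1"]) auto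
next
  case (insert j I)
  show ?case
  proof (cases "\<forall>v\<in>V. g v j = 0")
    case True
    obtain c where "\<exists>v\<in>V. c v \<noteq> 0" "\<forall>i\<in>I. (\<Sum>v\<in>V. c v * g v i) = 0"
      using insert.IH[of V g] insert.prems insert.hyps by auto
    with True show ?thesis by (intro exI[of _ c]) auto
  next
    case False
    then obtain w where w: "w \<in> V" "g w j \<noteq> 0" by blast
    \<comment> \<open>Gaussian elimination: clear coordinate \<open>j\<close> using the pivot \<open>w\<close>.\<close>
    define V' where "V' = V - {w}"
    define g' where "g' v i = g v i - g v j / g w j * g w i" for v i
    have "card I < card V'" using insert w by (simp add: V'_def)
    then obtain c' where c': "\<exists>v\<in>V'. c' v \<noteq> 0" "\<forall>i\<in>I. (\<Sum>v\<in>V'. c' v * g' v i) = 0"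
      using insert.IH[of V' g'] insert.prems by (auto simp: V'_def)
    define c where "c v = (if v = w then - (\<Sum>v\<in>V'. c' v * g v j) / g w j else c' v)" for v
    have split: "(\<Sum>v\<in>V. c v * g v i) = c w * g w i + (\<Sum>v\<in>V'. c' v * g v i)" for i
    proof -
      have "(\<Sum>v\<in>V. c v * g v i) = c w * g w i + (\<Sum>v\<in>V'. c v * g v i)"
        using sum.remove[OF insert.prems(1) w(1)] by (simp add: V'_def)
      also have "(\<Sum>v\<in>V'. c v * g v i) = (\<Sum>v\<in>V'. c' v * g v i)"
        by (intro sum.cong) (auto simp: c_def V'_def)
      finally show ?thesis .
    qed
    have "(\<Sum>v\<in>V. c v * g v i) = 0" if "i \<in> I" for i
    proof -
      have "(\<Sum>v\<in>V'. c' v * g v i) = (\<Sum>v\<in>V'. c' v * g' v i + c' v * g v j * (g w i / g w j))"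
        by (intro sum.cong) (auto simp: g'_def algebra_simps)
      also have "\<dots> = (\<Sum>v\<in>V'. c' v * g v j) * (g w i / g w j)"
        using c'(2) that
        by (simp add: sum.distrib sum_distrib_right[symmetric] sum_divide_distrib[symmetric])
      finally show ?thesis using split[of i] w(2) by (simp add: c_def)
    qed
    moreover have "(\<Sum>v\<in>V. c v * g v j) = 0" using split[of j] w(2) by (simp add: c_def)
    moreover have "\<exists>v\<in>V. c v \<noteq> 0" using c' by (auto simp: c_def V'_def)
    ultimately show ?thesis by (intro exI[of _ c]) auto
  qed
qed

lemma sum_square_linear_combination:
  fixes \<psi> :: "'v \<Rightarrow> 'i \<Rightarrow> 'a::comm_ring_1"
  shows "(\<Sum>i\<in>I. (\<Sum>v\<in>V. a v * \<psi> v i)\<^sup>2)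
       = (\<Sum>v\<in>V. \<Sum>w\<in>V. a v * a w * (\<Sum>i\<in>I. \<psi> v i * \<psi> w i))"
proof -
  have "(\<Sum>i\<in>I. (\<Sum>v\<in>V. a v * \<psi> v i)\<^sup>2) = (\<Sum>i\<in>I. \<Sum>v\<in>V. \<Sum>w\<in>V. a v * a w * (\<psi> v i * \<psi> w i))"
    unfolding power2_eq_square sum_product by (intro sum.cong refl) (simp add: mult_ac)
  also have "\<dots> = (\<Sum>v\<in>V. \<Sum>w\<in>V. \<Sum>i\<in>I. a v * a w * (\<psi> v i * \<psi> w i))"
    by (subst sum.swap) (intro sum.cong refl sum.swap)
  finally show ?thesis by (simp add: sum_distrib_left)
qed

lemma linear_relation_weighted_sum:
  fixes \<psi> :: "'v \<Rightarrow> 'i \<Rightarrow> 'a::comm_ring_1"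
  assumes "\<forall>i\<in>I. (\<Sum>v\<in>V. c v * \<psi> v i) = 0"
  shows "(\<Sum>v\<in>V. c v * (\<Sum>i\<in>I. x i * \<psi> v i)) = 0"
proof -
  have "(\<Sum>v\<in>V. c v * (\<Sum>i\<in>I. x i * \<psi> v i)) = (\<Sum>i\<in>I. x i * (\<Sum>v\<in>V. c v * \<psi> v i))"
    by (simp add: sum_distrib_left sum.swap[of _ V] mult_ac)
  then show ?thesis using assms by simp
qed

lemma positive_linear_relation:
  fixes \<psi> :: "'v \<Rightarrow> 'i \<Rightarrow> real"
  assumes finV: "finite V" and finI: "finite I" and card: "card I < card V"
    and edges: "\<And>v w. E v w \<Longrightarrow> v \<in> V \<and> w \<in> V"
    and connected: "\<And>v w. v \<in> V \<Longrightarrow> w \<in> V \<Longrightarrow> E\<^sup>*\<^sup>* v w"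
    and nonpos: "\<And>v w. v \<in> V \<Longrightarrow> w \<in> V \<Longrightarrow> v \<noteq> w \<Longrightarrow> (\<Sum>i\<in>I. \<psi> v i * \<psi> w i) \<le> 0"
    and neg: "\<And>v w. E v w \<Longrightarrow> (\<Sum>i\<in>I. \<psi> v i * \<psi> w i) < 0"
  shows "\<exists>c. (\<forall>v\<in>V. c v > 0) \<and> (\<forall>i\<in>I. (\<Sum>v\<in>V. c v * \<psi> v i) = 0)"
proof -
  obtain c where c0: "\<exists>v\<in>V. c v \<noteq> 0" and c: "\<forall>i\<in>I. (\<Sum>v\<in>V. c v * \<psi> v i) = 0"
    using exists_nontrivial_linear_relation[OF finI finV card] by blast
  define ip where "ip v w = (\<Sum>i\<in>I. \<psi> v i * \<psi> w i)" for v w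
  define a where "a v = \<bar>c v\<bar>" for v
  \<comment> \<open>Replacing \<open>c\<close> by \<open>\<bar>c\<bar>\<close> can only decrease the Gram form, which is positive semidefinite.\<close>
  have "(\<Sum>v\<in>V. \<Sum>w\<in>V. a v * a w * ip v w) \<le> (\<Sum>v\<in>V. \<Sum>w\<in>V. c v * c w * ip v w)"
  proof (intro sum_mono)
    fix v w assume "v \<in> V" "w \<in> V"
    then show "a v * a w * ip v w \<le> c v * c w * ip v w"
      using nonpos[of v w] abs_mult_self_eq[of "c v"]
      by (cases "v = w") (auto simp: a_def ip_def abs_mult[symmetric] intro!: mult_right_mono_neg)
  qed
  also have "\<dots> = 0"
    using sum_square_linear_combination[where a=c and \<psi>=\<psi> and I=I and V=V] c by (simp add: ip_def)
  finally have "(\<Sum>i\<in>I. (\<Sum>v\<in>V. a v * \<psi> v i)\<^sup>2) \<le> 0"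
    using sum_square_linear_combination[where a=a and \<psi>=\<psi> and I=I and V=V] by (simp add: ip_def)
  then have a: "\<forall>i\<in>I. (\<Sum>v\<in>V. a v * \<psi> v i) = 0"
    using sum_nonneg_eq_0_iff[OF finI, of "\<lambda>i. (\<Sum>v\<in>V. a v * \<psi> v i)\<^sup>2"]
    by (simp add: order_antisym sum_nonneg)
  \<comment> \<open>Pairing the relation \<open>a \<ge> 0\<close> with \<open>\<psi> w\<close>: if \<open>a w = 0\<close>, all terms are \<open>\<le> 0\<close>, so \<open>a\<close> vanishes on the neighbours of \<open>w\<close>.\<close>
  have propagate: "a v = 0" if "a w = 0" "E w v" for v w
  proof -
    have "(\<Sum>t\<in>V. a t * ip w t) = 0"
      using linear_relation_weighted_sum[OF a, of "\<psi> w"] by (simp add: ip_def mult_ac)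
    moreover have "a t * ip w t \<le> 0" if "t \<in> V" for t
      using \<open>a w = 0\<close> nonpos[of w t] edges[OF \<open>E w v\<close>] that
      by (cases "t = w") (auto simp: a_def ip_def intro: mult_nonneg_nonpos)
    ultimately have "\<forall>t\<in>V. a t * ip w t = 0"
      using sum_nonneg_eq_0_iff[OF finV, of "\<lambda>t. - (a t * ip w t)"] by (simp add: sum_negf)
    then show ?thesis
      using edges[OF that(2)] neg[OF that(2)] by (auto simp: ip_def)
  qed
  obtain v0 where v0: "v0 \<in> V" "a v0 \<noteq> 0" using c0 by (auto simp: a_def)
  have "a v > 0" if v: "v \<in> V" for v
  proof (rule ccontr)
    assume "\<not> a v > 0"
    then have "a v = 0" by (simp add: a_def)
    with connected[OF v v0(1)] have "a v0 = 0"
      by (induction rule: rtranclp_induct) (auto intro: propagate)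
    with v0 show False by simp
  qed
  with a show ?thesis by blast
qed

lemma sign_change:
  fixes c :: "'v \<Rightarrow> real"
  assumes "finite V" "\<forall>v\<in>V. c v > 0" "(\<Sum>v\<in>V. c v * t v) = 0" "q \<in> V" "t q < 0"
  shows "\<exists>v\<in>V. t v > 0"
proof (rule ccontr)
  assume "\<not> (\<exists>v\<in>V. t v > 0)"
  then have "\<forall>v\<in>V. c v * t v \<le> 0"
    using assms(2) by (auto intro!: mult_nonneg_nonpos simp: not_less less_imp_le)
  then have "c q * t q = 0"
    using sum_nonneg_eq_0_iff[OF assms(1), of "\<lambda>v. - (c v * t v)"] assms(3,4) by (simp add: sum_negf)
  with assms(2,4,5) show False by force
qed

section \<open>Trees and blow-downs\<close>

lemma plumbing_treeD:
  assumes "plumbing_tree V E"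
  shows "finite V" "\<And>a b. E a b \<Longrightarrow> a \<in> V \<and> b \<in> V" "\<And>a b. E a b \<Longrightarrow> E b a"
    "\<And>a. \<not> E a a" "\<And>a b. a \<in> V \<Longrightarrow> b \<in> V \<Longrightarrow> E\<^sup>*\<^sup>* a b"
    "card {{a, b} | a b. E a b} = card V - 1"
  using assms unfolding plumbing_tree_def by blast+

lemma finite_edge_set:
  assumes "finite V" "\<And>a b. E a b \<Longrightarrow> a \<in> V \<and> b \<in> V"
  shows "finite {{a, b} | a b. E a b}"
  by (rule finite_subset[of _ "Pow V"]) (use assms in auto)

lemma exists_parent_map:
  assumes "\<And>v. v \<in> V \<Longrightarrow> E\<^sup>*\<^sup>* u v"
  shows "\<exists>(par :: 'v \<Rightarrow> 'v) (dist :: 'v \<Rightarrow> nat).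
           (\<forall>v\<in>V. v \<noteq> u \<longrightarrow> E (par v) v \<and> dist (par v) < dist v) \<and>
           (\<forall>v. E u v \<and> v \<noteq> u \<longrightarrow> dist v = 1)"
proof -
  define dist where "dist v = (LEAST k. (E ^^ k) u v)" for v
  have dist_le: "dist v \<le> k" if "(E ^^ k) u v" for v k
    unfolding dist_def using that by (rule Least_le)
  have "\<exists>p. E p v \<and> dist p < dist v" if v: "v \<in> V" "v \<noteq> u" for v
  proof -
    have path: "(E ^^ dist v) u v"
      unfolding dist_def using assms[OF v(1)] by (metis LeastI_ex rtranclp_power)
    with v(2) obtain k where k: "dist v = Suc k" by (cases "dist v") auto
    with path obtain p where "(E ^^ k) u p" "E p v" by (metis relpowp_Suc_E)
    then show ?thesis using dist_le k by force
  qed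
  then obtain par where "\<And>v. v \<in> V \<Longrightarrow> v \<noteq> u \<Longrightarrow> E (par v) v \<and> dist (par v) < dist v"
    by metis
  moreover have "dist v = 1" if "E u v" "v \<noteq> u" for v
  proof -
    have "dist v \<le> 1" using dist_le[of 1 v] that(1) by (metis relpowp_1)
    moreover have "\<not> (E ^^ 0) u v" using that(2) by simp
    then have "dist v \<noteq> 0" unfolding dist_def by (metis (mono_tags, lifting) LeastI_ex that(1) relpowp_1)
    ultimately show ?thesis by simp
  qed
  ultimately show ?thesis by blast
qed

text \<open>The edges from the parent map give \<open>card V - 1\<close> distinct edges, none of which is \<open>{x, y}\<close>.\<close>

lemma plumbing_tree_no_triangle:
  assumes tree: "plumbing_tree V E" and "E u x" "E u y" "x \<noteq> y"
  shows "\<not> E x y"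
proof
  assume "E x y"
  note T = plumbing_treeD[OF tree]
  define EE where "EE = {{a, b} | a b. E a b}"
  have uV: "u \<in> V" using T(2) \<open>E u x\<close> by blast
  have ux: "x \<noteq> u" and uy: "y \<noteq> u" using T(4) \<open>E u x\<close> \<open>E u y\<close> by auto
  obtain par and dist :: "_ \<Rightarrow> nat"
    where par: "\<forall>v\<in>V. v \<noteq> u \<longrightarrow> E (par v) v \<and> dist (par v) < dist v"
      and dist1: "\<forall>v. E u v \<and> v \<noteq> u \<longrightarrow> dist v = 1"
    using exists_parent_map[where V=V and E=E and u=u, OF T(5)[OF uV]] by blast
  define F where "F v = {v, par v}" for v
  have "inj_on F (V - {u})"
  proof (rule inj_onI)
    fix v w assume vw: "v \<in> V - {u}" "w \<in> V - {u}" "F v = F w"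
    show "v = w"
    proof (rule ccontr)
      assume "v \<noteq> w"
      then have "v = par w" "w = par v" using vw(3) by (auto simp: F_def doubleton_eq_iff)
      then show False using par vw(1,2) by (metis DiffE insertI1 less_asym)
    qed
  qed
  moreover have "F ` (V - {u}) \<subseteq> EE - {{x, y}}"
  proof
    fix e assume "e \<in> F ` (V - {u})"
    then obtain v where v: "v \<in> V" "v \<noteq> u" and e: "e = {v, par v}" by (auto simp: F_def)
    have "e \<in> EE" using par v T(3) e unfolding EE_def by blast
    moreover have "e \<noteq> {x, y}"
      using par v dist1 \<open>E u x\<close> \<open>E u y\<close> ux uy e by (auto simp: doubleton_eq_iff)
    ultimately show "e \<in> EE - {{x, y}}" by blast
  qed
  ultimately have "card (V - {u}) \<le> card (EE - {{x, y}})"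
    using finite_edge_set[OF T(1,2)] by (simp add: card_inj_on_le EE_def)
  moreover have "{x, y} \<in> EE" unfolding EE_def using \<open>E x y\<close> by blast
  moreover have "card {u, x, y} \<le> card V"
    using T(1,2) \<open>E u x\<close> \<open>E u y\<close> by (intro card_mono) auto
  ultimately show False
    using T(1,6) finite_edge_set[OF T(1,2)] uV ux uy \<open>x \<noteq> y\<close> by (simp add: EE_def)
qed

definition blowdown :: "('v \<Rightarrow> 'v \<Rightarrow> bool) \<Rightarrow> 'v \<Rightarrow> 'v \<Rightarrow> 'v \<Rightarrow> bool" where
  "blowdown E u p q \<longleftrightarrow> (E p q \<and> p \<noteq> u \<and> q \<noteq> u) \<or> (p \<noteq> q \<and> E u p \<and> E u q)"

lemma blowdown_connected:
  assumes sym: "\<And>a b. E a b \<Longrightarrow> E b a" and path: "E\<^sup>*\<^sup>* a b" and "a \<noteq> u" "b \<noteq> u"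
  shows "(blowdown E u)\<^sup>*\<^sup>* a b"
proof -
  \<comment> \<open>A path through \<open>u\<close> is short-cut by the blown-down edge between the two neighbours of \<open>u\<close> it uses.\<close>
  have "if t = u then \<exists>s. E u s \<and> (blowdown E u)\<^sup>*\<^sup>* a s else (blowdown E u)\<^sup>*\<^sup>* a t"
    if "E\<^sup>*\<^sup>* a t" for t
    using that
  proof (induction rule: rtranclp_induct)
    case base
    then show ?case using \<open>a \<noteq> u\<close> by simp
  next
    case (step s t)
    show ?case
    proof (cases "s = u")
      case True
      with step.IH obtain s' where s': "E u s'" "(blowdown E u)\<^sup>*\<^sup>* a s'" by auto
      show ?thesis
      proof (cases "t = u \<or> t = s'")
        case False
        then have "blowdown E u s' t" using s'(1) step.hyps(2) True by (auto simp: blowdown_def)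
        then show ?thesis using False s'(2) by (auto intro: rtranclp.rtrancl_into_rtrancl)
      qed (use s' in auto)
    next
      case False
      then have "(blowdown E u)\<^sup>*\<^sup>* a s" using step.IH by simp
      moreover have "t \<noteq> u \<Longrightarrow> blowdown E u s t" using step.hyps(2) False by (simp add: blowdown_def)
      ultimately show ?thesis using sym[OF step.hyps(2)] by (auto intro: rtranclp.rtrancl_into_rtrancl)
    qed
  qed
  then show ?thesis using path \<open>b \<noteq> u\<close> by (metis (full_types))
qed

lemma blowdown_edge_set:
  assumes sym: "\<And>a b. E a b \<Longrightarrow> E b a" and irrefl: "\<And>a. \<not> E a a"
  shows "{{a, b} | a b. blowdown E u a b}
       = ({{a, b} | a b. E a b} - (\<lambda>v. {u, v}) ` {v. E u v}) \<union> {{p, q} | p q. p \<noteq> q \<and> E u p \<and> E u q}"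
  using sym irrefl unfolding blowdown_def by (auto simp: doubleton_eq_iff) blast+

lemma card_blowdown_edge_set:
  assumes tree: "plumbing_tree V E" and u: "u \<in> V" and valence: "card {v. E u v} \<in> {1, 2}"
  shows "card {{a, b} | a b. blowdown E u a b} = card (V - {u}) - 1"
proof -
  note T = plumbing_treeD[OF tree]
  define N where "N = {v. E u v}"
  define EE where "EE = {{a, b} | a b. E a b}"
  define S where "S = (\<lambda>v. {u, v}) ` N"
  define P where "P = {{p, q} | p q. p \<noteq> q \<and> E u p \<and> E u q}"
  have finEE: "finite EE" using finite_edge_set[OF T(1,2)] by (simp add: EE_def)
  have "S \<subseteq> EE" by (auto simp: S_def N_def EE_def)
  moreover have "card S = card N"
    unfolding S_def using T(4) by (intro card_image inj_onI) (auto simp: N_def doubleton_eq_iff)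
  ultimately have card_EE_S: "card (EE - S) = card V - 1 - card N" "card N \<le> card EE"
    using card_Diff_subset[of S EE] finite_subset[of S EE] card_mono[of EE S] finEE T(6)
    by (simp_all add: EE_def)
  have P: "finite P \<and> card P = card N - 1 \<and> P \<inter> EE = {}"
  proof (cases "card N = 1")
    case True
    then obtain z where "N = {z}" by (auto simp: card_1_singleton_iff)
    then have "P = {}" by (auto simp: P_def N_def set_eq_iff)
    then show ?thesis using True by simp
  next
    case False
    then obtain x y where N: "N = {x, y}" "x \<noteq> y" using valence by (auto simp: N_def card_2_iff)
    then have "E u v \<longleftrightarrow> v = x \<or> v = y" for v by (auto simp: N_def set_eq_iff)
    then have "P = {{x, y}}" using N(2) by (auto simp: P_def doubleton_eq_iff)
    moreover have "{x, y} \<notin> EE"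
      using plumbing_tree_no_triangle[OF tree, of u x y] N T(3) by (auto simp: EE_def N_def doubleton_eq_iff)
    ultimately show ?thesis using N by simp
  qed
  have "{{a, b} | a b. blowdown E u a b} = (EE - S) \<union> P"
    unfolding EE_def S_def N_def P_def by (rule blowdown_edge_set[OF T(3,4)])
  also have "card \<dots> = card (EE - S) + card P"
    using P finEE by (intro card_Un_disjoint) auto
  also have "\<dots> = card (V - {u}) - 1"
    using card_EE_S P valence T(1,6) u by (auto simp: EE_def N_def)
  finally show ?thesis .
qed

lemma plumbing_tree_blowdown:
  assumes tree: "plumbing_tree V E" and u: "u \<in> V" and valence: "card {v. E u v} \<in> {1, 2}"
  shows "plumbing_tree (V - {u}) (blowdown E u)"
proof -
  note T = plumbing_treeD[OF tree]
  have "V - {u} \<noteq> {}"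
    using valence T(2,4) by (metis Collect_empty_eq DiffI card.empty empty_iff insert_iff
        singletonD zero_neq_numeral zero_neq_one)
  moreover have "(blowdown E u)\<^sup>*\<^sup>* a b" if "a \<in> V - {u}" "b \<in> V - {u}" for a b
    using blowdown_connected[OF T(3) T(5)] that by blast
  ultimately show ?thesis
    using T(1-4) card_blowdown_edge_set[OF assms] unfolding plumbing_tree_def blowdown_def by auto
qed

section \<open>Blow-ups of \<open>T\<^sub>c\<close>\<close>

text \<open>A blow-up of \<open>T\<^sub>c\<close> in which \<open>u\<close> is still the \<open>(-1)\<close>-vertex; \<open>in_C\<close> is the same up to
  changing \<open>d u\<close> to \<open>-2\<close>.\<close>

definition is_Tc_blowup :: "'v set \<Rightarrow> ('v \<Rightarrow> 'v \<Rightarrow> bool) \<Rightarrow> ('v \<Rightarrow> int) \<Rightarrow> 'v \<Rightarrow> bool" where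
  "is_Tc_blowup V E d u \<longleftrightarrow> (\<exists>m E' d' f. cgen m E' d' (f u) \<and> bij_betw f V {0..<m} \<and>
      (\<forall>p\<in>V. \<forall>q\<in>V. E p q \<longleftrightarrow> E' (f p) (f q)) \<and> (\<forall>p\<in>V. d p = d' (f p)))"

lemma in_C_if_is_Tc_blowup:
  assumes "is_Tc_blowup V E d u" "u \<in> V"
  shows "in_C V E (d(u := -2))"
proof -
  obtain m E' d' f where cg: "cgen m E' d' (f u)" and bij: "bij_betw f V {0..<m}"
    and edges: "\<forall>p\<in>V. \<forall>q\<in>V. E p q \<longleftrightarrow> E' (f p) (f q)" and dec: "\<forall>p\<in>V. d p = d' (f p)"
    using assms(1) unfolding is_Tc_blowup_def by blast
  have "\<forall>p\<in>V. (d(u := -2)) p = (d'(f u := -2)) (f p)"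
    using dec assms(2) bij_betw_imp_inj_on[OF bij] by (auto simp: inj_on_eq_iff)
  then show ?thesis unfolding in_C_def using cg bij edges by blast
qed

lemma is_Tc_blowup_Tc:
  assumes V: "V = {u, x, y, z}" and distinct: "distinct [u, x, y, z]"
    and sym: "\<And>p q. E p q \<Longrightarrow> E q p" and irrefl: "\<And>p. \<not> E p p"
    and edges: "E u x" "E u y" "E u z" "\<not> E x y" "\<not> E x z" "\<not> E y z"
    and dec: "d u = -1" "d x = -2" "d y = -3" "d z = -6"
  shows "is_Tc_blowup V E d u"
proof -
  define f where "f v = (if v = u then 0 else if v = x then 1 else if v = z then 2 else (3::nat))" for v
  have f: "f u = 0" "f x = 1" "f z = 2" "f y = 3" using distinct by (auto simp: f_def)
  have "bij_betw f V {0..<4}"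
    unfolding bij_betw_def V using f distinct by (auto simp: insert_commute)
  moreover have "\<forall>p\<in>V. \<forall>q\<in>V. E p q \<longleftrightarrow> Tc_E (f p) (f q)"
    unfolding V using f edges sym irrefl by (auto simp: Tc_E_def)
  moreover have "\<forall>p\<in>V. d p = Tc_d (f p)"
    unfolding V using f dec by (auto simp: Tc_d_def)
  ultimately show ?thesis
    unfolding is_Tc_blowup_def using cgen.base f(1) by (metis (no_types, lifting))
qed

lemma cgen_bounds:
  "cgen m E d u \<Longrightarrow> u < m \<and> (\<forall>a b. E a b \<longrightarrow> a < m \<and> b < m)"
  by (induction rule: cgen.induct) (auto simp: Tc_E_def doubleton_eq_iff intro: less_SucI)

lemma is_Tc_blowup_extend:
  assumes blowdown: "is_Tc_blowup (V - {u}) (blowdown E u) d' x" and "u \<in> V" "x \<noteq> u"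
  obtains m E2 d2 F where "cgen m E2 d2 (F x)" "bij_betw F V {0..<Suc m}" "F u = m"
    "\<And>p q. p \<in> V \<Longrightarrow> q \<in> V \<Longrightarrow> E2 (F p) (F q) \<longleftrightarrow> p \<noteq> u \<and> q \<noteq> u \<and> blowdown E u p q"
    "\<And>p. p \<in> V - {u} \<Longrightarrow> F p \<noteq> m \<and> d' p = d2 (F p)"
proof -
  obtain m E2 d2 f where cg: "cgen m E2 d2 (f x)" and bij: "bij_betw f (V - {u}) {0..<m}"
    and edges: "\<forall>p\<in>V - {u}. \<forall>q\<in>V - {u}. blowdown E u p q \<longleftrightarrow> E2 (f p) (f q)"
    and dec: "\<forall>p\<in>V - {u}. d' p = d2 (f p)"
    using blowdown unfolding is_Tc_blowup_def by blast
  define F where "F = f(u := m)"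
  have "bij_betw F (V - {u}) {0..<m}" using bij by (rule bij_betw_cong[THEN iffD1, rotated]) (simp add: F_def)
  then have "bij_betw F (V - {u} \<union> {u}) ({0..<m} \<union> {F u})"
    by (subst notIn_Un_bij_betw3[symmetric]) (auto simp: F_def)
  moreover have "V - {u} \<union> {u} = V" "{0..<m} \<union> {F u} = {0..<Suc m}" using \<open>u \<in> V\<close> by (auto simp: F_def)
  ultimately have "bij_betw F V {0..<Suc m}" by simp
  moreover have "E2 (F p) (F q) \<longleftrightarrow> p \<noteq> u \<and> q \<noteq> u \<and> blowdown E u p q" if "p \<in> V" "q \<in> V" for p q
    using that edges cgen_bounds[OF cg] by (auto simp: F_def)
  moreover have "F p \<noteq> m \<and> d' p = d2 (F p)" if "p \<in> V - {u}" for p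
    using that dec bij by (auto simp: F_def bij_betw_def)
  moreover have "cgen m E2 d2 (F x)" using cg \<open>x \<noteq> u\<close> by (simp add: F_def)
  ultimately show ?thesis using that[of m E2 d2 F] by (simp add: F_def)
qed

lemma inj_on_doubleton_eq_iff:
  assumes "inj_on F A" "a \<in> A" "b \<in> A" "c \<in> A" "d \<in> A"
  shows "{F a, F b} = {F c, F d} \<longleftrightarrow> {a, b} = {c, d}"
  using assms by (auto simp: doubleton_eq_iff inj_on_eq_iff)

lemma is_Tc_blowup_blowup_vertex:
  assumes tree: "plumbing_tree V E" and "u \<in> V" "x \<noteq> u"
    and blowdown: "is_Tc_blowup (V - {u}) (blowdown E u) d' x"
    and nbrs: "\<And>v. E u v \<longleftrightarrow> v = x"
    and dec: "\<And>p. p \<in> V - {u} \<Longrightarrow> d p = d' p - (if p = x then 1 else 0)" "d u = -1"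
  shows "is_Tc_blowup V E d u"
proof -
  note T = plumbing_treeD[OF tree]
  obtain m E2 d2 F where cg: "cgen m E2 d2 (F x)" and bij: "bij_betw F V {0..<Suc m}" and "F u = m"
    and E2: "\<And>p q. p \<in> V \<Longrightarrow> q \<in> V \<Longrightarrow> E2 (F p) (F q) \<longleftrightarrow> p \<noteq> u \<and> q \<noteq> u \<and> blowdown E u p q"
    and d2: "\<And>p. p \<in> V - {u} \<Longrightarrow> F p \<noteq> m \<and> d' p = d2 (F p)"
    by (rule is_Tc_blowup_extend[OF blowdown \<open>u \<in> V\<close> \<open>x \<noteq> u\<close>]) (rule that)
  have "x \<in> V" using nbrs T(2) by blast
  have inj: "inj_on F V" using bij by (rule bij_betw_imp_inj_on)
  define E3 where "E3 a b \<longleftrightarrow> E2 a b \<or> {a, b} = {F x, m}" for a b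
  define d3 where "d3 = d2(F x := d2 (F x) - 1, m := -1)"
  have "cgen (Suc m) E3 d3 (F u)"
    unfolding E3_def d3_def \<open>F u = m\<close> by (rule cgen.blowup_vertex[OF cg])
  moreover have "E p q \<longleftrightarrow> E3 (F p) (F q)" if "p \<in> V" "q \<in> V" for p q
  proof -
    have "E p q \<longleftrightarrow> (p \<noteq> u \<and> q \<noteq> u \<and> blowdown E u p q) \<or> {p, q} = {x, u}"
      using nbrs T(3,4) by (auto simp: blowdown_def doubleton_eq_iff)
    then show ?thesis
      unfolding E3_def E2[OF that] \<open>F u = m\<close>[symmetric]
      using inj_on_doubleton_eq_iff[OF inj that \<open>x \<in> V\<close> \<open>u \<in> V\<close>] by simp
  qed
  moreover have "d p = d3 (F p)" if "p \<in> V" for p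
    using d2[of p] d2[of x] dec that \<open>x \<in> V\<close> \<open>x \<noteq> u\<close> \<open>F u = m\<close> inj_on_eq_iff[OF inj that \<open>x \<in> V\<close>]
    by (cases "p = u") (auto simp: d3_def)
  ultimately show ?thesis unfolding is_Tc_blowup_def using bij by blast
qed

lemma is_Tc_blowup_blowup_edge:
  assumes tree: "plumbing_tree V E" and "u \<in> V" "x \<noteq> u"
    and blowdown: "is_Tc_blowup (V - {u}) (blowdown E u) d' x"
    and nbrs: "\<And>v. E u v \<longleftrightarrow> v = x \<or> v = y" and "x \<noteq> y"
    and dec: "\<And>p. p \<in> V - {u} \<Longrightarrow> d p = d' p - (if p = x \<or> p = y then 1 else 0)" "d u = -1"
  shows "is_Tc_blowup V E d u"
proof -
  note T = plumbing_treeD[OF tree]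
  obtain m E2 d2 F where cg: "cgen m E2 d2 (F x)" and bij: "bij_betw F V {0..<Suc m}" and "F u = m"
    and E2: "\<And>p q. p \<in> V \<Longrightarrow> q \<in> V \<Longrightarrow> E2 (F p) (F q) \<longleftrightarrow> p \<noteq> u \<and> q \<noteq> u \<and> blowdown E u p q"
    and d2: "\<And>p. p \<in> V - {u} \<Longrightarrow> F p \<noteq> m \<and> d' p = d2 (F p)"
    by (rule is_Tc_blowup_extend[OF blowdown \<open>u \<in> V\<close> \<open>x \<noteq> u\<close>]) (rule that)
  have "x \<in> V" "y \<in> V" "y \<noteq> u" using nbrs T(2,4) by blast+
  have "\<not> E x y" using plumbing_tree_no_triangle[OF tree] nbrs \<open>x \<noteq> y\<close> by blast
  have inj: "inj_on F V" using bij by (rule bij_betw_imp_inj_on)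
  define E3 where
    "E3 a b \<longleftrightarrow> (E2 a b \<and> {a, b} \<noteq> {F x, F y}) \<or> {a, b} = {F x, m} \<or> {a, b} = {F y, m}" for a b
  define d3 where "d3 = d2(F x := d2 (F x) - 1, F y := d2 (F y) - 1, m := -1)"
  have "E2 (F x) (F y)"
    using E2[OF \<open>x \<in> V\<close> \<open>y \<in> V\<close>] nbrs \<open>x \<noteq> u\<close> \<open>y \<noteq> u\<close> \<open>x \<noteq> y\<close> by (simp add: blowdown_def)
  then have "cgen (Suc m) E3 d3 (F u)"
    unfolding E3_def d3_def \<open>F u = m\<close> by (rule cgen.blowup_edge[OF cg])
  moreover have "E p q \<longleftrightarrow> E3 (F p) (F q)" if "p \<in> V" "q \<in> V" for p q
  proof -
    have "E p q \<longleftrightarrow> ((p \<noteq> u \<and> q \<noteq> u \<and> blowdown E u p q) \<and> {p, q} \<noteq> {x, y})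
        \<or> {p, q} = {x, u} \<or> {p, q} = {y, u}"
      using nbrs T(3,4) \<open>\<not> E x y\<close> by (auto simp: blowdown_def doubleton_eq_iff)
    then show ?thesis
      unfolding E3_def E2[OF that] \<open>F u = m\<close>[symmetric]
      using inj_on_doubleton_eq_iff[OF inj that] \<open>x \<in> V\<close> \<open>y \<in> V\<close> \<open>u \<in> V\<close> by simp
  qed
  moreover have "d p = d3 (F p)" if "p \<in> V" for p
    using d2[of p] d2[of x] d2[of y] dec that \<open>x \<in> V\<close> \<open>y \<in> V\<close> \<open>x \<noteq> u\<close> \<open>y \<noteq> u\<close> \<open>x \<noteq> y\<close> \<open>F u = m\<close>
      inj_on_eq_iff[OF inj that \<open>x \<in> V\<close>] inj_on_eq_iff[OF inj that \<open>y \<in> V\<close>]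
      inj_on_eq_iff[OF inj \<open>x \<in> V\<close> \<open>y \<in> V\<close>]
    by (cases "p = u") (auto simp: d3_def)
  ultimately show ?thesis unfolding is_Tc_blowup_def using bij by blast
qed

section \<open>Embedded trees\<close>

locale tree_embedding =
  fixes V :: "'v set" and E :: "'v \<Rightarrow> 'v \<Rightarrow> bool" and \<phi> :: "'v \<Rightarrow> 'i \<Rightarrow> int" and I :: "'i set"
  assumes tree: "plumbing_tree V E"
    and finite_I: "finite I"
    and card_I_less: "card I < card V"
    and pairing: "\<And>v w. v \<in> V \<Longrightarrow> w \<in> V \<Longrightarrow> v \<noteq> w \<Longrightarrow> Q_on I (\<phi> v) (\<phi> w) = (if E v w then 1 else 0)"
begin

lemmas treeD = plumbing_treeD[OF tree]

lemma positive_relation: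
  "\<exists>c. (\<forall>v\<in>V. c v > 0) \<and> (\<forall>i\<in>I. (\<Sum>v\<in>V. c v * real_of_int (\<phi> v i)) = 0)"
proof (rule positive_linear_relation[where E = E])
  have ip: "(\<Sum>i\<in>I. real_of_int (\<phi> v i) * real_of_int (\<phi> w i)) = - real_of_int (Q_on I (\<phi> v) (\<phi> w))"
    for v w by (simp add: Q_on_def)
  show "(\<Sum>i\<in>I. real_of_int (\<phi> v i) * real_of_int (\<phi> w i)) \<le> 0"
    if "v \<in> V" "w \<in> V" "v \<noteq> w" for v w
    using that by (simp add: ip pairing)
  show "(\<Sum>i\<in>I. real_of_int (\<phi> v i) * real_of_int (\<phi> w i)) < 0" if "E v w" for v w
    using that treeD(2,4) by (metis ip pairing of_int_1 neg_less_0_iff_less zero_less_one)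
qed (use finite_I card_I_less treeD in auto)

lemma linear_form_sign_change:
  assumes "q \<in> V" "(\<Sum>i\<in>I. x i * \<phi> q i) < 0"
  shows "\<exists>v\<in>V. (\<Sum>i\<in>I. x i * \<phi> v i) > 0"
proof -
  obtain c where c: "\<forall>v\<in>V. c v > 0" "\<forall>i\<in>I. (\<Sum>v\<in>V. c v * real_of_int (\<phi> v i)) = 0"
    using positive_relation by blast
  have "(\<Sum>v\<in>V. c v * real_of_int (\<Sum>i\<in>I. x i * \<phi> v i)) = 0"
    using linear_relation_weighted_sum[OF c(2), of "\<lambda>i. real_of_int (x i)"] by simp
  then have "\<exists>v\<in>V. real_of_int (\<Sum>i\<in>I. x i * \<phi> v i) > 0"
    by (rule sign_change[OF treeD(1) c(1) _ assms(1)]) (simp only: of_int_less_0_iff assms(2))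
  then show ?thesis by (simp only: of_int_0_less_iff)
qed

lemma linear_form_nonpos_imp_zero:
  assumes "\<And>v. v \<in> V \<Longrightarrow> (\<Sum>i\<in>I. x i * \<phi> v i) \<le> 0" "v \<in> V"
  shows "(\<Sum>i\<in>I. x i * \<phi> v i) = 0"
  using linear_form_sign_change[of v x] assms by force

lemma column_sum_sign_change:
  assumes "J \<subseteq> I" "q \<in> V" "(\<Sum>i\<in>J. \<phi> q i) < 0"
  shows "\<exists>v\<in>V. (\<Sum>i\<in>J. \<phi> v i) > 0"
proof -
  have "(\<Sum>i\<in>I. of_bool (i \<in> J) * \<phi> v i) = (\<Sum>i\<in>J. \<phi> v i)" for v
    using assms(1) finite_I by (simp add: sum.If_cases Int_absorb1)
  then show ?thesis using linear_form_sign_change[of q "\<lambda>i. of_bool (i \<in> J)"] assms by simp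
qed

end

text \<open>The invariant of the blow-down induction: a tree with a unique \<open>(-1)\<close>-vertex \<open>u\<close>,
  embedded in \<open>\<int>\<^sup>I\<close> with \<open>|I| = |V| - 1\<close>; \<open>adjunction\<close> is the condition \<open>Q(v, K) + Q(v, v) = -2\<close>.\<close>

locale exceptional_embedding =
  fixes V :: "'v set" and E :: "'v \<Rightarrow> 'v \<Rightarrow> bool" and d :: "'v \<Rightarrow> int"
    and \<phi> :: "'v \<Rightarrow> nat \<Rightarrow> int" and I :: "nat set" and u :: 'v
  assumes tree: "plumbing_tree V E"
    and finite_I: "finite I"
    and card_I: "card I + 1 = card V"
    and pairing: "\<And>v w. v \<in> V \<Longrightarrow> w \<in> V \<Longrightarrow> v \<noteq> w \<Longrightarrow> Q_on I (\<phi> v) (\<phi> w) = (if E v w then 1 else 0)"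
    and self_pairing: "\<And>v. v \<in> V \<Longrightarrow> Q_on I (\<phi> v) (\<phi> v) = d v"
    and adjunction: "\<And>v. v \<in> V \<Longrightarrow> (\<Sum>i\<in>I. \<phi> v i) = d v + 2"
    and exceptional: "u \<in> V" "d u = -1"
    and unique_exceptional: "\<And>v. v \<in> V \<Longrightarrow> d v = -1 \<Longrightarrow> v = u"
    and column_types: "\<And>i. i \<in> I \<Longrightarrow> index_coeffs V \<phi> i \<in> {type9, type5, type4, type7}"
    and one_type9: "card {i\<in>I. index_coeffs V \<phi> i = type9} = 1"
    and one_type5: "card {i\<in>I. index_coeffs V \<phi> i = type5} = 1"

sublocale exceptional_embedding \<subseteq> tree_embedding V E \<phi> I
  using tree finite_I card_I pairing by unfold_locales auto

context exceptional_embedding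
begin

lemma decoration_le: "v \<in> V \<Longrightarrow> d v \<le> -1"
  using sum_le_sum_squares[of "\<phi> v" I] self_pairing[of v] adjunction[of v] by (simp add: Q_on_def)

lemma decoration_le_minus2: "v \<in> V \<Longrightarrow> v \<noteq> u \<Longrightarrow> d v \<le> -2"
  using decoration_le unique_exceptional by fastforce

lemma exceptional_unit: "\<exists>a\<in>I. \<forall>i\<in>I. \<phi> u i = (if i = a then 1 else 0)"
  using int_unit_vector[OF finite_I] self_pairing[of u] adjunction[of u] exceptional
  by (simp add: Q_on_def)

lemma exists_coeff_minus2: "\<exists>q\<in>V. \<exists>i\<in>I. \<phi> q i = -2 \<and> d q \<le> -4"
proof -
  obtain i where i: "i \<in> I" "index_coeffs V \<phi> i = type5"
    using one_type5 by (metis (mono_tags, lifting) card_1_singletonE mem_Collect_eq singletonI)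
  then obtain q where "q \<in> V" "\<phi> q i = -2"
    using exists_vertex_with_coeff[OF treeD(1), of "-2" \<phi> i] by (auto simp: type5_def)
  moreover have "d q \<le> -4"
    using Q_on_self_le[OF finite_I i(1), of "\<phi> q"] self_pairing[OF \<open>q \<in> V\<close>] \<open>\<phi> q i = -2\<close> by simp
  ultimately show ?thesis using i(1) by blast
qed

context
  fixes a assumes a: "a \<in> I" and unit: "\<And>i. i \<in> I \<Longrightarrow> \<phi> u i = (if i = a then 1 else 0)"
begin

lemma exceptional_column:
  assumes "v \<in> V" "v \<noteq> u"
  shows "(\<phi> v a = 0 \<or> \<phi> v a = -1) \<and> (E u v \<longleftrightarrow> \<phi> v a = -1)"
  using pairing[of u v] exceptional(1) assms Q_on_unit_left[OF finite_I a, of "\<phi> u" "\<phi> v"] unit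
  by (auto split: if_splits)

lemma neighbours_eq: "{v. E u v} = {v\<in>V. \<phi> v a = -1}"
  using exceptional_column treeD(2,4) unit[OF a] by fastforce

lemma card_neighbours: "card {v. E u v} = count (index_coeffs V \<phi> a) (-1)"
  using count_index_coeffs[OF treeD(1)] by (simp add: neighbours_eq)

lemma exceptional_column_not_type5: "index_coeffs V \<phi> a \<noteq> type5"
proof
  assume "index_coeffs V \<phi> a = type5"
  then obtain q where "q \<in> V" "\<phi> q a = -2"
    using exists_vertex_with_coeff[OF treeD(1), of "-2" \<phi> a] by (auto simp: type5_def)
  then show False using exceptional_column[of q] unit[OF a] by (cases "q = u") auto
qed

text \<open>Pair the positive relation with the column sums over \<open>I - {a}\<close>: they are \<open>d v + 2 - \<phi> v a\<close>,
  which is \<open>0\<close> at \<open>u\<close> and negative at a vertex with a coefficient \<open>-2\<close>.\<close>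

lemma exists_minus2_neighbour: "\<exists>x. E u x \<and> d x = -2"
proof -
  have col_sum: "(\<Sum>i\<in>I - {a}. \<phi> v i) = d v + 2 - \<phi> v a" if "v \<in> V" for v
    using adjunction[OF that] finite_I a by (simp add: sum_diff1)
  obtain q i where q: "q \<in> V" "i \<in> I" "\<phi> q i = -2" "d q \<le> -4" using exists_coeff_minus2 by blast
  have "q \<noteq> u" using q(3) unit[OF q(2)] by (auto split: if_splits)
  then have "(\<Sum>i\<in>I - {a}. \<phi> q i) < 0" using col_sum[OF q(1)] exceptional_column[OF q(1)] q(4) by auto
  then obtain v where v: "v \<in> V" "(\<Sum>i\<in>I - {a}. \<phi> v i) > 0"
    using column_sum_sign_change[of "I - {a}" q] q(1) by blast
  have "v \<noteq> u" using v(2) col_sum[OF v(1)] exceptional(2) unit[OF a] by auto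
  then show ?thesis
    using v col_sum[OF v(1)] exceptional_column[OF v(1)] decoration_le_minus2[OF v(1)] by auto
qed

lemma blowdown_pairing:
  assumes "v \<in> V - {u}" "w \<in> V - {u}" "v \<noteq> w"
  shows "Q_on (I - {a}) (\<phi> v) (\<phi> w) = (if blowdown E u v w then 1 else 0)"
proof (cases "E u v \<and> E u w")
  case True
  then have "\<not> E v w" using plumbing_tree_no_triangle[OF tree] assms(3) by blast
  then show ?thesis
    using True assms exceptional_column[of v] exceptional_column[of w]
    by (simp add: Q_on_remove[OF finite_I a] pairing blowdown_def)
next
  case False
  then have "\<phi> v a * \<phi> w a = 0" using assms exceptional_column[of v] exceptional_column[of w] by auto
  then show ?thesis
    using False assms by (auto simp: Q_on_remove[OF finite_I a] pairing blowdown_def)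
qed

lemma valence_exceptional:
  assumes "index_coeffs V \<phi> a \<noteq> type9"
  shows "card {v. E u v} \<in> {1, 2}"
proof -
  have "index_coeffs V \<phi> a \<in> {type4, type7}"
    using column_types[OF a] assms exceptional_column_not_type5 by auto
  then show ?thesis by (auto simp: card_neighbours type4_def type7_def)
qed

lemma blowdown_self_pairing:
  "v \<in> V - {u} \<Longrightarrow> Q_on (I - {a}) (\<phi> v) (\<phi> v) = d v + \<phi> v a * \<phi> v a"
  by (simp add: Q_on_remove[OF finite_I a] self_pairing)

lemma blowdown_adjunction:
  assumes "v \<in> V - {u}"
  shows "(\<Sum>i\<in>I - {a}. \<phi> v i) = d v + \<phi> v a * \<phi> v a + 2"
proof -
  have "\<phi> v a * \<phi> v a = - \<phi> v a" using exceptional_column[of v] assms by auto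
  then show ?thesis using assms adjunction[of v] finite_I a by (simp add: sum_diff1)
qed

text \<open>Two \<open>(-1)\<close>-vertices of the blow-down cannot be adjacent, but any two neighbours of \<open>u\<close> are.\<close>

lemma blowdown_unique_exceptional:
  assumes x: "E u x" "d x = -2" and v: "v \<in> V - {u}" "d v + \<phi> v a * \<phi> v a = -1"
  shows "v = x"
proof (rule ccontr)
  assume "v \<noteq> x"
  have "x \<in> V - {u}" using x(1) treeD(2,4) by blast
  then have "\<phi> x a = -1" using exceptional_column x(1) by blast
  have "\<phi> v a = -1"
    using v unique_exceptional[of v] exceptional_column[of v] by auto
  then have "blowdown E u x v"
    using \<open>v \<noteq> x\<close> v(1) x(1) exceptional_column[of v] by (auto simp: blowdown_def)
  moreover have "Q_on (I - {a}) (\<phi> x) (\<phi> v) \<le> 0"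
    using blowdown_self_pairing[OF \<open>x \<in> V - {u}\<close>] blowdown_adjunction[OF \<open>x \<in> V - {u}\<close>]
      blowdown_self_pairing[OF v(1)] blowdown_adjunction[OF v(1)] \<open>\<phi> x a = -1\<close> x(2) v(2) finite_I
    by (intro minus_one_vectors_nonadjacent) simp_all
  ultimately show False using blowdown_pairing[OF \<open>x \<in> V - {u}\<close> v(1)] \<open>v \<noteq> x\<close> by simp
qed

lemma blowdown_exceptional_embedding:
  assumes not_type9: "index_coeffs V \<phi> a \<noteq> type9" and x: "E u x" "d x = -2"
  shows "exceptional_embedding (V - {u}) (blowdown E u) (\<lambda>v. d v + \<phi> v a * \<phi> v a) \<phi> (I - {a}) x"
proof -
  have "x \<in> V - {u}" using x(1) treeD(2,4) by blast
  then have "\<phi> x a = -1" using exceptional_column x(1) by blast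
  have columns: "index_coeffs (V - {u}) \<phi> i = index_coeffs V \<phi> i" if "i \<in> I - {a}" for i
    using that unit by (intro index_coeffs_diff_vertex) simp
  then have "{i \<in> I - {a}. index_coeffs (V - {u}) \<phi> i = t} = {i \<in> I. index_coeffs V \<phi> i = t}"
    if "index_coeffs V \<phi> a \<noteq> t" for t
    using that a by auto
  then have counts: "card {i \<in> I - {a}. index_coeffs (V - {u}) \<phi> i = type9} = 1"
    "card {i \<in> I - {a}. index_coeffs (V - {u}) \<phi> i = type5} = 1"
    using one_type9 one_type5 not_type9 exceptional_column_not_type5 by simp_all
  have card': "card (I - {a}) + 1 = card (V - {u})"
    using card_I a finite_I exceptional(1) treeD(1) card_gt_0_iff[of I]
    by (auto simp: card_Diff_singleton)
  show ?thesis
  proof unfold_locales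
    show "plumbing_tree (V - {u}) (blowdown E u)"
      by (rule plumbing_tree_blowdown[OF tree exceptional(1) valence_exceptional[OF not_type9]])
    show "finite (I - {a})" using finite_I by simp
    show "Q_on (I - {a}) (\<phi> v) (\<phi> w) = (if blowdown E u v w then 1 else 0)"
      if "v \<in> V - {u}" "w \<in> V - {u}" "v \<noteq> w" for v w
      using that by (rule blowdown_pairing)
    show "v = x" if "v \<in> V - {u}" "d v + \<phi> v a * \<phi> v a = -1" for v
      using blowdown_unique_exceptional[OF x that] .
    show "index_coeffs (V - {u}) \<phi> i \<in> {type9, type5, type4, type7}" if "i \<in> I - {a}" for i
      using columns[OF that] column_types[of i] that by simp
  qed (use card' counts blowdown_self_pairing blowdown_adjunction \<open>x \<in> V - {u}\<close> \<open>\<phi> x a = -1\<close> x(2)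
      in simp_all)
qed

lemma is_Tc_blowup_from_blowdown:
  assumes not_type9: "index_coeffs V \<phi> a \<noteq> type9" and x: "E u x"
    and blowdown: "is_Tc_blowup (V - {u}) (blowdown E u) (\<lambda>v. d v + \<phi> v a * \<phi> v a) x"
  shows "is_Tc_blowup V E d u"
proof -
  have "x \<noteq> u" using x treeD(4) by blast
  have dec: "d p = (d p + \<phi> p a * \<phi> p a) - (if E u p then 1 else 0)" if "p \<in> V - {u}" for p
    using exceptional_column[of p] that by auto
  show ?thesis
  proof (cases "card {v. E u v} = 1")
    case True
    then have "E u v \<longleftrightarrow> v = x" for v using x by (auto simp: card_1_singleton_iff set_eq_iff)
    then show ?thesis
      using dec exceptional(2)
      by (intro is_Tc_blowup_blowup_vertex[OF tree exceptional(1) \<open>x \<noteq> u\<close> blowdown]) auto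
  next
    case False
    then have "card {v. E u v} = 2" using valence_exceptional[OF not_type9] by simp
    then obtain p q where pq: "{v. E u v} = {p, q}" "p \<noteq> q" by (auto simp: card_2_iff)
    define y where "y = (if x = p then q else p)"
    have "x \<in> {p, q}" using pq(1) x by blast
    then have "y \<noteq> x" "E u v \<longleftrightarrow> v = x \<or> v = y" for v
      using pq unfolding y_def by (auto simp: set_eq_iff)
    then show ?thesis
      using dec exceptional(2)
      by (intro is_Tc_blowup_blowup_edge[OF tree exceptional(1) \<open>x \<noteq> u\<close> blowdown]) auto
  qed
qed

lemma minus2_neighbour_vector:
  assumes "E u x" "d x = -2"
  shows "\<exists>b\<in>I. b \<noteq> a \<and> (\<forall>i\<in>I. \<phi> x i = (if i = a then -1 else if i = b then 1 else 0))"
proof -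
  have x: "x \<in> V" "x \<noteq> u" using assms(1) treeD(2,4) by blast+
  then have "\<phi> x a = -1" using exceptional_column assms(1) by blast
  then have "(\<Sum>i\<in>I - {a}. \<phi> x i * \<phi> x i) = 1" "(\<Sum>i\<in>I - {a}. \<phi> x i) = 1"
    using self_pairing[OF x(1)] adjunction[OF x(1)] assms(2) finite_I a by (simp_all add: Q_on_def sum_diff1)
  then obtain b where "b \<in> I - {a}" "\<forall>i\<in>I - {a}. \<phi> x i = (if i = b then 1 else 0)"
    using int_unit_vector[of "I - {a}" "\<phi> x"] finite_I by blast
  then show ?thesis using \<open>\<phi> x a = -1\<close> by (intro bexI[of _ b]) auto
qed

context
  fixes x y z b
  assumes type9: "index_coeffs V \<phi> a = type9"
    and neighbours: "{v. E u v} = {x, y, z}" "distinct [x, y, z]"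
    and dx: "d x = -2"
    and b: "b \<in> I" "b \<noteq> a" "\<forall>i\<in>I. \<phi> x i = (if i = a then -1 else if i = b then 1 else 0)"
begin

lemma type9_neighbours:
  "x \<in> V" "y \<in> V" "z \<in> V" "distinct [u, x, y, z]" "\<not> E x y" "\<not> E x z" "\<not> E y z"
  "\<phi> x a = -1" "\<phi> y a = -1" "\<phi> z a = -1" "\<phi> y b = -1" "\<phi> z b = -1"
proof -
  have E: "E u x" "E u y" "E u z" using neighbours(1) by auto
  show V: "x \<in> V" "y \<in> V" "z \<in> V" using E treeD(2) by blast+
  show "distinct [u, x, y, z]" using E treeD(4) neighbours(2) by auto
  show "\<not> E x y" "\<not> E x z" "\<not> E y z"
    using plumbing_tree_no_triangle[OF tree E(1,2)] plumbing_tree_no_triangle[OF tree E(1,3)]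
      plumbing_tree_no_triangle[OF tree E(2,3)] neighbours(2) by simp_all
  show "\<phi> x a = -1" "\<phi> y a = -1" "\<phi> z a = -1"
    using E neighbours_eq by blast+
  have "Q_on I (\<phi> x) (\<phi> w) = \<phi> w a - \<phi> w b" for w
    using Q_on_two_coeffs_left[OF finite_I a b(1) b(2)[symmetric] b(3)] .
  moreover have "Q_on I (\<phi> x) (\<phi> y) = 0" "Q_on I (\<phi> x) (\<phi> z) = 0"
    using pairing V \<open>\<not> E x y\<close> \<open>\<not> E x z\<close> neighbours(2) by simp_all
  ultimately show "\<phi> y b = -1" "\<phi> z b = -1"
    using \<open>\<phi> y a = -1\<close> \<open>\<phi> z a = -1\<close> by simp_all
qed

lemma type9_outside_vertex:
  assumes "v \<in> V - {u, x, y, z}"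
  shows "\<phi> v a = 0" "\<phi> v b = 0" "\<not> E x v"
proof -
  note N = type9_neighbours
  show "\<phi> v a = 0" using assms neighbours(1) exceptional_column[of v] by auto
  \<comment> \<open>Column \<open>b\<close> is not of type (9), so it has at most two entries \<open>-1\<close>; they are at \<open>y\<close> and \<open>z\<close>.\<close>
  have "index_coeffs V \<phi> b \<noteq> type9"
    using one_type9 type9 a b(1,2) by (metis (mono_tags, lifting) card_1_singletonE mem_Collect_eq singletonD)
  then have "count (index_coeffs V \<phi> b) (-1) \<le> 2"
    using column_types[OF b(1)] by (auto simp: type5_def type4_def type7_def)
  then have "card {w\<in>V. \<phi> w b = -1} \<le> 2" using count_index_coeffs[OF treeD(1), of "-1" \<phi> b] by simp
  moreover have "{y, z} \<subseteq> {w\<in>V. \<phi> w b = -1}" using N by auto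
  moreover have "card {y, z} = 2" using N(4) by simp
  ultimately have "{y, z} = {w\<in>V. \<phi> w b = -1}"
    using treeD(1) by (intro card_seteq) auto
  then have "\<phi> v b \<noteq> -1" using assms by blast
  moreover have "Q_on I (\<phi> x) (\<phi> v) = - \<phi> v b"
    using Q_on_two_coeffs_left[OF finite_I a b(1) b(2)[symmetric] b(3)] \<open>\<phi> v a = 0\<close> by simp
  ultimately show "\<phi> v b = 0" "\<not> E x v"
    using pairing[of x v] assms N(1) by (auto split: if_splits)
qed

text \<open>The linear form with coefficients \<open>\<phi> y + \<phi> z + K + e\<^sub>a + e\<^sub>b\<close> is \<open>\<le> 0\<close> on all vertices
  (and \<open>0\<close> on \<open>u, x, y, z\<close>), hence it vanishes; so no other vertex is adjacent to \<open>y\<close> or \<open>z\<close>.\<close>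

lemma type9_outside_nonadjacent:
  assumes "v \<in> V - {u, x, y, z}"
  shows "\<not> E y v" "\<not> E z v"
proof -
  note N = type9_neighbours
  define \<chi> where "\<chi> i = \<phi> y i + \<phi> z i + 1 + of_bool (i = a) + of_bool (i = b)" for i
  define k where "k v = - Q_on I (\<phi> y) (\<phi> v) - Q_on I (\<phi> z) (\<phi> v) + (d v + 2) + \<phi> v a + \<phi> v b" for v
  have k_form: "k v = (\<Sum>i\<in>I. \<chi> i * \<phi> v i)" if "v \<in> V" for v
  proof -
    have "(\<Sum>i\<in>I. of_bool (i = c) * \<phi> v i) = (\<Sum>i\<in>I. if i = c then \<phi> v i else 0)" for c
      by (rule sum.cong) auto
    then have delta: "(\<Sum>i\<in>I. of_bool (i = c) * \<phi> v i) = \<phi> v c" if "c \<in> I" for c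
      using finite_I that by simp
    then show ?thesis
      using adjunction[OF that] delta[OF a] delta[OF b(1)]
      by (simp add: k_def \<chi>_def Q_on_def distrib_left sum.distrib mult.commute)
  qed
  have k_outside: "k v = d v + 2 - of_bool (E y v) - of_bool (E z v)" if "v \<in> V - {u, x, y, z}" for v
  proof -
    have "v \<in> V" "y \<noteq> v" "z \<noteq> v" using that by auto
    then show ?thesis
      using type9_outside_vertex[OF that] pairing[of y v] pairing[of z v] N(2,3) by (simp add: k_def)
  qed
  have "E u y" "E u z" "y \<noteq> u" "z \<noteq> u" using neighbours(1) N(4) by auto
  then have "k u = 0"
    using pairing[of y u] pairing[of z u] treeD(3) N exceptional unit[OF a] unit[OF b(1)] b(2)
    by (simp add: k_def)
  moreover have "y \<noteq> x" "z \<noteq> x" "\<not> E y x" "\<not> E z x" using N treeD(3) by auto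
  then have "k x = 0"
    using pairing[of y x] pairing[of z x] N dx b by (simp add: k_def)
  moreover have "Q_on I (\<phi> y) (\<phi> z) = 0" "Q_on I (\<phi> z) (\<phi> y) = 0"
    using pairing[of y z] Q_on_commute[of I "\<phi> z" "\<phi> y"] N by simp_all
  then have "k y = 0" "k z = 0"
    using self_pairing[of y] self_pairing[of z] N by (simp_all add: k_def)
  moreover have "k v \<le> 0" if "v \<in> V - {u, x, y, z}" for v
    using k_outside[OF that] decoration_le_minus2[of v] that by simp
  ultimately have "k v \<le> 0" if "v \<in> V" for v
    using that by (cases "v \<in> {u, x, y, z}") auto
  then have "(\<Sum>i\<in>I. \<chi> i * \<phi> v i) = 0"
    using linear_form_nonpos_imp_zero[of \<chi> v] assms k_form by simp
  then show "\<not> E y v" "\<not> E z v"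
    using k_outside[OF assms] k_form[of v] decoration_le_minus2[of v] assms
    by (cases "E y v"; cases "E z v"; simp)+
qed

lemma type9_vertices: "V = {u, x, y, z}"
proof -
  have closed: "q \<in> {u, x, y, z}" if "p \<in> {u, x, y, z}" "E p q" for p q
    using that treeD(2,3) type9_outside_nonadjacent[of q] type9_outside_vertex(3)[of q] neighbours(1)
    by blast
  have "v \<in> {u, x, y, z}" if "v \<in> V" for v
    using treeD(5)[OF exceptional(1) that] by (induction rule: rtranclp_induct) (simp, use closed in blast)
  then show ?thesis using type9_neighbours exceptional(1) by blast
qed

lemma type9_decorations: "{d y, d z} = {-3, -6}"
proof -
  note N = type9_neighbours
  have "card I = 3" using card_I type9_vertices N(4) by simp
  then have "card (I - {a, b}) = 1" using a b(1,2) finite_I by (simp add: card_Diff_subset)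
  then obtain j where "I - {a, b} = {j}" by (rule card_1_singletonE)
  then have I: "I = {a, b, j}" "j \<noteq> a" "j \<noteq> b" using a b(1) by auto
  have Q: "Q_on I (\<phi> v) (\<phi> w) = - (\<phi> v a * \<phi> w a + \<phi> v b * \<phi> w b + \<phi> v j * \<phi> w j)" for v w
    using I b(2) by (simp add: Q_on_def)
  have "\<phi> y j * \<phi> z j = -2"
    using pairing[of y z] N Q[of y z] by simp
  then have "(\<phi> y j * \<phi> y j = 1 \<and> \<phi> z j * \<phi> z j = 4) \<or> (\<phi> y j * \<phi> y j = 4 \<and> \<phi> z j * \<phi> z j = 1)"
    by (rule int_mult_eq_minus2)
  moreover have "d y = -2 - \<phi> y j * \<phi> y j" "d z = -2 - \<phi> z j * \<phi> z j"
    using self_pairing[OF N(2)] self_pairing[OF N(3)] N Q by simp_all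
  ultimately show ?thesis by auto
qed

end

lemma type9_is_Tc_blowup:
  assumes type9: "index_coeffs V \<phi> a = type9"
  shows "is_Tc_blowup V E d u"
proof -
  obtain x where x: "E u x" "d x = -2" using exists_minus2_neighbour by blast
  have "card {v. E u v} = 3" using type9 by (simp add: card_neighbours type9_def)
  then have "card ({v. E u v} - {x}) = 2" using x(1) by (simp add: card_Diff_singleton_if)
  then obtain y z where yz: "{v. E u v} - {x} = {y, z}" "y \<noteq> z" by (meson card_2_iff)
  then have neighbours: "{v. E u v} = {x, y, z}" "distinct [x, y, z]" using x(1) by auto
  obtain b where b: "b \<in> I" "b \<noteq> a" "\<forall>i\<in>I. \<phi> x i = (if i = a then -1 else if i = b then 1 else 0)"
    using minus2_neighbour_vector[OF x] by blast
  note facts = type9_neighbours[OF type9 neighbours x(2) b] type9_vertices[OF type9 neighbours x(2) b]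
  have "E u y" "E u z" using neighbours(1) by auto
  then consider "d y = -3" "d z = -6" | "d y = -6" "d z = -3"
    using type9_decorations[OF type9 neighbours x(2) b] by (auto simp: doubleton_eq_iff)
  then show ?thesis
  proof cases
    case 1
    then show ?thesis
      using facts x \<open>E u y\<close> \<open>E u z\<close> exceptional(2) treeD(3,4) by (intro is_Tc_blowup_Tc) auto
  next
    case 2
    then show ?thesis
      using facts x \<open>E u y\<close> \<open>E u z\<close> exceptional(2) treeD(3,4) by (intro is_Tc_blowup_Tc[of V u x z y]) auto
  qed
qed

end

end

lemma exceptional_embedding_is_Tc_blowup:
  "exceptional_embedding V E d \<phi> I u \<Longrightarrow> is_Tc_blowup V E d u"
proof (induction "card V" arbitrary: V E d I u rule: less_induct)
  case less
  interpret exceptional_embedding V E d \<phi> I u by (rule less.prems)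
  obtain a where a: "a \<in> I" "\<And>i. i \<in> I \<Longrightarrow> \<phi> u i = (if i = a then 1 else 0)"
    using exceptional_unit by blast
  show ?case
  proof (cases "index_coeffs V \<phi> a = type9")
    case True
    then show ?thesis using type9_is_Tc_blowup a by blast
  next
    case False
    obtain x where x: "E u x" "d x = -2" using exists_minus2_neighbour[OF a] by blast
    have "card (V - {u}) < card V" using card_Diff1_less[OF treeD(1) exceptional(1)] .
    then have "is_Tc_blowup (V - {u}) (blowdown E u) (\<lambda>v. d v + \<phi> v a * \<phi> v a) x"
      using less.hyps blowdown_exceptional_embedding[OF a False x] by blast
    then show ?thesis using is_Tc_blowup_from_blowdown a False x(1) by blast
  qed
qed

section \<open>Removing the index of type (2)\<close>

context
  fixes V :: "'v set" and E :: "'v \<Rightarrow> 'v \<Rightarrow> bool" and d :: "'v \<Rightarrow> int" and \<phi> :: "'v \<Rightarrow> nat \<Rightarrow> int"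
  assumes tree: "plumbing_tree V E"
    and minimal: "minimal_tree V d"
    and emb: "symplectic_embedding V E d \<phi>"
    and t9: "card {i. i < card V \<and> index_coeffs V \<phi> i = type9} = 1"
    and t5: "card {i. i < card V \<and> index_coeffs V \<phi> i = type5} = 1"
    and t2: "card {i. i < card V \<and> index_coeffs V \<phi> i = type2} = 1"
    and rest: "\<forall>i < card V. index_coeffs V \<phi> i \<in> {type9, type5, type2, type4, type7}"
begin

lemma symplectic_embedding_Q_on:
  "\<And>v v'. v \<in> V \<Longrightarrow> v' \<in> V \<Longrightarrow> v \<noteq> v' \<Longrightarrow> Q_on {..<card V} (\<phi> v) (\<phi> v') = (if E v v' then 1 else 0)"
  "\<And>v. v \<in> V \<Longrightarrow> Q_on {..<card V} (\<phi> v) (\<phi> v) = d v"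
  "\<And>v. v \<in> V \<Longrightarrow> (\<Sum>i<card V. \<phi> v i) = d v + 2"
proof -
  have K: "Qn (card V) (\<phi> v) Kvec = - (\<Sum>i<card V. \<phi> v i)" for v by (simp add: Qn_def Kvec_def)
  show "\<And>v v'. v \<in> V \<Longrightarrow> v' \<in> V \<Longrightarrow> v \<noteq> v' \<Longrightarrow> Q_on {..<card V} (\<phi> v) (\<phi> v') = (if E v v' then 1 else 0)"
    "\<And>v. v \<in> V \<Longrightarrow> Q_on {..<card V} (\<phi> v) (\<phi> v) = d v"
    using emb by (simp_all add: symplectic_embedding_def Let_def Qn_eq_Q_on)
  then show "\<And>v. v \<in> V \<Longrightarrow> (\<Sum>i<card V. \<phi> v i) = d v + 2"
    using emb K by (force simp: symplectic_embedding_def Let_def Qn_eq_Q_on)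
qed

lemma minimal_decoration_le_minus2: "v \<in> V \<Longrightarrow> d v \<le> -2"
  using sum_le_sum_squares[of "\<phi> v" "{..<card V}"] symplectic_embedding_Q_on(2,3)[of v] minimal
  by (fastforce simp: Q_on_def minimal_tree_def)

context
  fixes i2 w
  assumes i2: "i2 < card V" "index_coeffs V \<phi> i2 = type2"
    and w: "w \<in> V" "\<And>v. v \<in> V \<Longrightarrow> \<phi> v i2 = (if v = w then -1 else 0)"
begin

abbreviation "J \<equiv> {..<card V} - {i2}"

lemma reduced_Q_on:
  assumes "v \<in> V" "v' \<in> V"
  shows "Q_on J (\<phi> v) (\<phi> v') = Q_on {..<card V} (\<phi> v) (\<phi> v') + of_bool (v = w \<and> v' = w)"
  using assms w(2) i2(1) by (simp add: Q_on_remove)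

lemma reduced_adjunction:
  assumes "v \<in> V"
  shows "(\<Sum>i\<in>J. \<phi> v i) = d v + 2 + of_bool (v = w)"
  using assms w(2) i2(1) symplectic_embedding_Q_on(3)[OF assms] by (simp add: sum_diff1)

lemma reduced_tree_embedding: "tree_embedding V E \<phi> J"
proof
  show "card J < card V" using i2(1) by simp
  show "Q_on J (\<phi> v) (\<phi> v') = (if E v v' then 1 else 0)" if "v \<in> V" "v' \<in> V" "v \<noteq> v'" for v v'
    using that reduced_Q_on symplectic_embedding_Q_on(1) by auto
qed (use tree in auto)

text \<open>The vertex with a coefficient \<open>-2\<close> has column sum \<open>d q + 2 + [q = w] < 0\<close> over \<open>J\<close>, so
  some vertex has a positive column sum; as all decorations are \<open>\<le> -2\<close>, this can only be \<open>w\<close>, with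
  \<open>d w = -2\<close>.\<close>

lemma type2_vertex_decoration: "d w = -2"
proof -
  interpret tree_embedding V E \<phi> J by (rule reduced_tree_embedding)
  obtain i5 where i5: "i5 < card V" "index_coeffs V \<phi> i5 = type5"
    using t5 by (metis (mono_tags, lifting) card_1_singletonE mem_Collect_eq singletonI)
  then obtain q where q: "q \<in> V" "\<phi> q i5 = -2"
    using exists_vertex_with_coeff[OF treeD(1), of "-2" \<phi> i5] by (auto simp: type5_def)
  have "i5 \<in> {..<card V}" using i5(1) by simp
  from Q_on_self_le[OF _ this, of "\<phi> q"] have "d q \<le> -4"
    using symplectic_embedding_Q_on(2)[OF q(1)] q(2) by simp
  then have "(\<Sum>i\<in>J. \<phi> q i) < 0" using reduced_adjunction[OF q(1)] by (cases "q = w") auto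
  then obtain v where "v \<in> V" "(\<Sum>i\<in>J. \<phi> v i) > 0"
    using column_sum_sign_change[of J q] q(1) by blast
  then show ?thesis
    using reduced_adjunction[of v] minimal_decoration_le_minus2[of v] by (cases "v = w") auto
qed

lemma reduced_exceptional_embedding: "exceptional_embedding V E (d(w := -1)) \<phi> J w"
proof -
  interpret tree_embedding V E \<phi> J by (rule reduced_tree_embedding)
  have types: "{i \<in> J. index_coeffs V \<phi> i = t} = {i. i < card V \<and> index_coeffs V \<phi> i = t}"
    if "t \<noteq> type2" for t
    using that i2(2) by auto
  have "i = i2" if "i < card V" "index_coeffs V \<phi> i = type2" for i
    using t2 that i2 by (metis (mono_tags, lifting) card_1_singletonE mem_Collect_eq singletonD)
  then have columns: "index_coeffs V \<phi> i \<in> {type9, type5, type4, type7}" if "i \<in> J" for i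
    using rest that by auto
  show ?thesis
  proof unfold_locales
    show "card J + 1 = card V" using i2(1) by simp
    show "card {i \<in> J. index_coeffs V \<phi> i = type9} = 1" "card {i \<in> J. index_coeffs V \<phi> i = type5} = 1"
      using t9 t5 types[of type9] types[of type5] type2_ne by simp_all
    show "Q_on J (\<phi> v) (\<phi> v) = (d(w := -1)) v" "(\<Sum>i\<in>J. \<phi> v i) = (d(w := -1)) v + 2" if "v \<in> V" for v
      using reduced_Q_on[OF that that] reduced_adjunction[OF that] symplectic_embedding_Q_on(2)[OF that]
        type2_vertex_decoration by auto
    show "v = w" if "v \<in> V" "(d(w := -1)) v = -1" for v
      using minimal that by (auto simp: minimal_tree_def split: if_splits)
  qed (use tree finite_I w(1) pairing columns in auto)
qed

end

lemma exists_exceptional_embedding: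
  "\<exists>w I. w \<in> V \<and> d w = -2 \<and> exceptional_embedding V E (d(w := -1)) \<phi> I w"
proof -
  obtain i2 where i2: "i2 < card V" "index_coeffs V \<phi> i2 = type2"
    using t2 by (metis (mono_tags, lifting) card_1_singletonE mem_Collect_eq singletonI)
  moreover obtain w where w: "w \<in> V" "\<forall>v\<in>V. \<phi> v i2 = (if v = w then -1 else 0)"
    using type2_column[OF plumbing_treeD(1)[OF tree] i2(2)] by blast
  ultimately show ?thesis
    using type2_vertex_decoration[OF i2 w(1) w(2)[rule_format]]
      reduced_exceptional_embedding[OF i2 w(1) w(2)[rule_format]] w(1) by blast
qed

end

theorem theorem3p13:
  fixes V :: "'v set" and E :: "'v \<Rightarrow> 'v \<Rightarrow> bool" and d :: "'v \<Rightarrow> int"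
    and \<phi> :: "'v \<Rightarrow> nat \<Rightarrow> int"
  assumes tree: "plumbing_tree V E"
    and minimal: "minimal_tree V d"
    and emb: "symplectic_embedding V E d \<phi>"
    and t9: "card {i. i < card V \<and> index_coeffs V \<phi> i = type9} = 1"
    and t5: "card {i. i < card V \<and> index_coeffs V \<phi> i = type5} = 1"
    and t2: "card {i. i < card V \<and> index_coeffs V \<phi> i = type2} = 1"
    and rest: "\<forall>i < card V. index_coeffs V \<phi> i \<in> {type9, type5, type2, type4, type7}"
  shows "in_C V E d"
proof -
  obtain w I where w: "w \<in> V" "d w = -2" and emb': "exceptional_embedding V E (d(w := -1)) \<phi> I w"
    using exists_exceptional_embedding[OF assms] by blast
  from emb' have "is_Tc_blowup V E (d(w := -1)) w" by (rule exceptional_embedding_is_Tc_blowup)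
  then have "in_C V E ((d(w := -1))(w := -2))" using w(1) by (rule in_C_if_is_Tc_blowup)
  then show ?thesis using w(2) by (simp add: fun_upd_idem)
qed

end
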